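(* Fix $x,t>0$ and let $\tau_1$ be a minimizer of $\tau\mapsto G(\tau,x,t)$ on $[0,\infty)$. Let $(\bar x,\bar t)\ne(x,t)$ be any point on the line segment joining $(x,t)$ and $(0,\tau_1)$. Then the minimizer of $\tau\mapsto G(\tau,\bar x,\bar t)$ on $[0,\infty)$ is unique and equals $\tau_1$.
   Context: Standing assumptions: $u_b:[0,\infty)\to(0,\infty)$ bounded measurable and positive; $\rho_b:[0,\infty)\to(0,\infty)$ positive locally bounded measurable. For $x,t,\tau\ge0$: $G(\tau,x,t)=\int_0^\tau[x-u_b(\eta)(t-\eta)]\rho_b(\eta)u_b(\eta)\,d\eta$. *)

theory Defs
  imports "HOL-Analysis.Analysis"
begin

definition G :: "(real \<Rightarrow> real) \<Rightarrow> (real \<Rightarrow> real) \<Rightarrow> real \<Rightarrow> real \<Rightarrow> real \<Rightarrow> real" where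
  "G u_b rho_b \<tau> x t =
     (LINT \<eta>:{0..\<tau>}|lborel. (x - u_b \<eta> * (t - \<eta>)) * rho_b \<eta> * u_b \<eta>)"

end

theory Submission
  imports Defs
begin

(* G is affine in (x, t), so along the segment G(., xb, tb) = (1 - s) G(., x, t) + s G(., 0, tau1)
   with 0 < s <= 1. The integrand of G(., 0, tau1) is u_b^2 rho_b (eta - tau1), which is negative
   before tau1 and positive after it; hence tau1 is the unique minimizer of G(., 0, tau1), and this
   strict minimality survives adding the nonnegative multiple (1 - s) of a function minimized at tau1. *)

lemma set_integrable_Icc_bounded:
  fixes f :: "real \<Rightarrow> real"
  assumes "f \<in> borel_measurable (restrict_space borel {a..b})"
    and "\<And>\<eta>. \<eta> \<in> {a..b} \<Longrightarrow> \<bar>f \<eta>\<bar> \<le> C"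
  shows "set_integrable lborel {a..b} f"
proof -
  interpret finite_measure "restrict_space lborel {a..b}"
    by (intro finite_measureI)
      (auto simp: emeasure_restrict_space space_restrict_space emeasure_lborel_Icc_eq)
  have "f \<in> borel_measurable (restrict_space lborel {a..b})"
    using assms(1) by (simp cong: measurable_cong_sets add: sets_restrict_space)
  then have "integrable (restrict_space lborel {a..b}) f"
    using assms(2) by (intro integrable_const_bound[where B=C]) (auto simp: AE_restrict_space_iff)
  then show ?thesis by (simp add: set_integrable_eq)
qed

lemma set_integral_pos_Ioc:
  fixes g :: "real \<Rightarrow> real"
  assumes "a < b" and "set_integrable lborel {a<..b} g" and "\<forall>\<eta>\<in>{a<..<b}. 0 < g \<eta>"
  shows "0 < (LINT \<eta>:{a<..b}|lborel. g \<eta>)"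
proof -
  let ?f = "\<lambda>\<eta>. indicator {a<..b} \<eta> *\<^sub>R g \<eta>"
  have f_int: "integrable lborel ?f"
    using assms(2) by (simp add: set_integrable_def)
  have f_nonneg: "AE \<eta> in lborel. 0 \<le> ?f \<eta>"
    using AE_lborel_singleton[of b]
    by eventually_elim (use assms(3) in \<open>auto simp: indicator_def less_imp_le\<close>)
  have "integral\<^sup>L lborel ?f \<noteq> 0"
  proof
    assume "integral\<^sup>L lborel ?f = 0"
    then have "AE \<eta> in lborel. ?f \<eta> = 0"
      using integral_nonneg_eq_0_iff_AE[OF f_int f_nonneg] by simp
    then have "AE \<eta> in lborel. \<eta> \<notin> {a<..<b}"
      by eventually_elim (use assms(3) in \<open>fastforce simp: indicator_def\<close>)
    then have "emeasure lborel {a<..<b} = 0"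
      by (subst (asm) AE_iff_measurable[OF _ refl])
        (auto simp: greaterThanLessThan_def greaterThan_def lessThan_def Int_def)
    with assms(1) show False by simp
  qed
  with integral_nonneg_AE[OF f_nonneg] show ?thesis
    by (simp add: set_lebesgue_integral_def)
qed

lemma argmin_unique_of_convex_combination:
  fixes f g h :: "'a \<Rightarrow> real"
  assumes "\<tau>1 \<in> S" and "\<forall>\<tau>\<in>S. f \<tau>1 \<le> f \<tau>" and "\<forall>\<tau>\<in>S. \<tau> \<noteq> \<tau>1 \<longrightarrow> g \<tau>1 < g \<tau>"
    and "0 < s" and "s \<le> 1" and "\<forall>\<tau>\<in>S. h \<tau> = (1 - s) * f \<tau> + s * g \<tau>"
  shows "{\<tau>\<in>S. \<forall>\<sigma>\<in>S. h \<tau> \<le> h \<sigma>} = {\<tau>1}"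
proof -
  have "h \<tau>1 < h \<tau>" if "\<tau> \<in> S" "\<tau> \<noteq> \<tau>1" for \<tau>
  proof -
    have "(1 - s) * f \<tau>1 \<le> (1 - s) * f \<tau>"
      using assms(2,5) that(1) by (intro mult_left_mono) auto
    moreover have "s * g \<tau>1 < s * g \<tau>"
      using assms(3,4) that by simp
    ultimately show ?thesis
      using assms(1,6) that(1) by simp
  qed
  then show ?thesis
    using assms(1) by force
qed

locale boundary_data =
  fixes u_b rho_b :: "real \<Rightarrow> real"
  assumes u_meas: "set_borel_measurable borel {0..} u_b"
    and u_bdd: "\<exists>B. \<forall>\<eta>\<ge>0. u_b \<eta> \<le> B"
    and u_pos: "\<forall>\<eta>\<ge>0. u_b \<eta> > 0"
    and rho_meas: "set_borel_measurable borel {0..} rho_b"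
    and rho_locbdd: "\<forall>T\<ge>0. \<exists>M. \<forall>\<eta>\<in>{0..T}. rho_b \<eta> \<le> M"
    and rho_pos: "\<forall>\<eta>\<ge>0. rho_b \<eta> > 0"
begin

definition integrand :: "real \<Rightarrow> real \<Rightarrow> real \<Rightarrow> real" where
  "integrand x t \<eta> = (x - u_b \<eta> * (t - \<eta>)) * rho_b \<eta> * u_b \<eta>"

lemma G_eq_integral: "G u_b rho_b \<tau> x t = (LINT \<eta>:{0..\<tau>}|lborel. integrand x t \<eta>)"
  by (simp add: G_def integrand_def)

lemma integrand_measurable: "integrand x t \<in> borel_measurable (restrict_space borel {0..})"
proof -
  have [measurable]: "u_b \<in> borel_measurable (restrict_space borel {0..})"
    "rho_b \<in> borel_measurable (restrict_space borel {0..})"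
    using u_meas rho_meas unfolding set_borel_measurable_def
    by (subst borel_measurable_restrict_space_iff; simp)+
  have [measurable]: "(\<lambda>\<eta>::real. \<eta>) \<in> borel_measurable (restrict_space borel {0..})"
    by (rule measurable_restrict_space1) simp
  show ?thesis
    unfolding integrand_def by measurable
qed

lemma integrand_set_integrable:
  assumes "0 \<le> \<tau>"
  shows "set_integrable lborel {0..\<tau>} (integrand x t)"
proof -
  obtain B where B: "\<forall>\<eta>\<ge>0. u_b \<eta> \<le> B"
    using u_bdd by blast
  obtain M where M: "\<forall>\<eta>\<in>{0..\<tau>}. rho_b \<eta> \<le> M"
    using rho_locbdd assms by blast
  have bound: "\<bar>integrand x t \<eta>\<bar> \<le> (\<bar>x\<bar> + B * (\<bar>t\<bar> + \<tau>)) * M * B"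
    if \<eta>: "\<eta> \<in> {0..\<tau>}" for \<eta>
  proof -
    have u: "0 < u_b \<eta>" "u_b \<eta> \<le> B" and rho: "0 < rho_b \<eta>" "rho_b \<eta> \<le> M"
      using \<eta> u_pos B rho_pos M by auto
    have "\<bar>x - u_b \<eta> * (t - \<eta>)\<bar> \<le> \<bar>x\<bar> + u_b \<eta> * \<bar>t - \<eta>\<bar>"
      using u by (simp add: abs_mult order_trans[OF abs_triangle_ineq4])
    also have "\<dots> \<le> \<bar>x\<bar> + B * (\<bar>t\<bar> + \<tau>)"
      using u \<eta> by (intro add_left_mono mult_mono) auto
    finally show ?thesis
      using u rho unfolding integrand_def abs_mult by (intro mult_mono) auto
  qed
  have "integrand x t \<in> borel_measurable (restrict_space borel {0..\<tau>})"
    using integrand_measurable by (rule measurable_restrict_mono) auto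
  then show ?thesis
    using bound by (rule set_integrable_Icc_bounded)
qed

lemma G_affine:
  assumes "0 \<le> \<tau>"
  shows "G u_b rho_b \<tau> ((1 - s) * x + s * x') ((1 - s) * t + s * t')
    = (1 - s) * G u_b rho_b \<tau> x t + s * G u_b rho_b \<tau> x' t'"
proof -
  have "integrand ((1 - s) * x + s * x') ((1 - s) * t + s * t')
      = (\<lambda>\<eta>. (1 - s) * integrand x t \<eta> + s * integrand x' t' \<eta>)"
    by (rule ext) (simp add: integrand_def algebra_simps)
  then show ?thesis
    using integrand_set_integrable[OF assms] by (simp add: G_eq_integral)
qed

lemma G_split:
  assumes "0 \<le> \<sigma>" and "\<sigma> \<le> \<tau>"
  shows "G u_b rho_b \<tau> x t = G u_b rho_b \<sigma> x t + (LINT \<eta>:{\<sigma><..\<tau>}|lborel. integrand x t \<eta>)"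
proof -
  have split: "{0..\<tau>} = {0..\<sigma>} \<union> {\<sigma><..\<tau>}"
    using assms by auto
  have "set_integrable lborel {\<sigma><..\<tau>} (integrand x t)"
    using assms by (intro set_integrable_subset[OF integrand_set_integrable[of \<tau>]]) auto
  then show ?thesis
    unfolding G_eq_integral split
    by (intro set_integral_Un integrand_set_integrable assms(1)) auto
qed

lemma G_zero_strict_argmin:
  assumes "0 \<le> \<tau>1" and "0 \<le> \<tau>" and "\<tau> \<noteq> \<tau>1"
  shows "G u_b rho_b \<tau>1 0 \<tau>1 < G u_b rho_b \<tau> 0 \<tau>1"
proof -
  have integrand_eq: "integrand 0 \<tau>1 \<eta> = (u_b \<eta> * u_b \<eta> * rho_b \<eta>) * (\<eta> - \<tau>1)" for \<eta>
    by (simp add: integrand_def algebra_simps)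
  have weight_pos: "0 < u_b \<eta> * u_b \<eta> * rho_b \<eta>" if "0 \<le> \<eta>" for \<eta>
    using u_pos rho_pos that by simp
  consider "\<tau>1 < \<tau>" | "\<tau> < \<tau>1"
    using assms(3) by linarith
  then show ?thesis
  proof cases
    case 1
    have "0 < (LINT \<eta>:{\<tau>1<..\<tau>}|lborel. integrand 0 \<tau>1 \<eta>)"
    proof (rule set_integral_pos_Ioc[OF 1])
      show "set_integrable lborel {\<tau>1<..\<tau>} (integrand 0 \<tau>1)"
        using assms by (intro set_integrable_subset[OF integrand_set_integrable[of \<tau>]]) auto
      show "\<forall>\<eta>\<in>{\<tau>1<..<\<tau>}. 0 < integrand 0 \<tau>1 \<eta>"
        using assms(1) weight_pos by (auto simp: integrand_eq)
    qed
    then show ?thesis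
      using G_split[of \<tau>1 \<tau>] 1 assms by simp
  next
    case 2
    have "0 < (LINT \<eta>:{\<tau><..\<tau>1}|lborel. - integrand 0 \<tau>1 \<eta>)"
    proof (rule set_integral_pos_Ioc[OF 2])
      show "set_integrable lborel {\<tau><..\<tau>1} (\<lambda>\<eta>. - integrand 0 \<tau>1 \<eta>)"
      proof -
        have "set_integrable lborel {\<tau><..\<tau>1} (integrand 0 \<tau>1)"
          using assms by (intro set_integrable_subset[OF integrand_set_integrable[of \<tau>1]]) auto
        then show ?thesis
          by (simp add: set_integrable_def)
      qed
      show "\<forall>\<eta>\<in>{\<tau><..<\<tau>1}. 0 < - integrand 0 \<tau>1 \<eta>"
        using assms(2) weight_pos by (auto simp: integrand_eq mult_pos_neg)
    qed
    then show ?thesis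
      using G_split[of \<tau> \<tau>1] 2 assms by (simp add: set_lebesgue_integral_def)
  qed
qed

end

theorem lemma2p4:
  fixes u_b rho_b :: "real \<Rightarrow> real" and x t \<tau>1 xb tb :: real
  assumes u_meas: "set_borel_measurable borel {0..} u_b"
    and u_bdd: "\<exists>B. \<forall>\<eta>\<ge>0. u_b \<eta> \<le> B"
    and u_pos: "\<forall>\<eta>\<ge>0. u_b \<eta> > 0"
    and rho_meas: "set_borel_measurable borel {0..} rho_b"
    and rho_locbdd: "\<forall>T\<ge>0. \<exists>M. \<forall>\<eta>\<in>{0..T}. rho_b \<eta> \<le> M"
    and rho_pos: "\<forall>\<eta>\<ge>0. rho_b \<eta> > 0"
    and x_pos: "x > 0" and t_pos: "t > 0"
    and \<tau>1_nonneg: "\<tau>1 \<ge> 0"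
    and \<tau>1_min: "\<forall>\<tau>\<ge>0. G u_b rho_b \<tau>1 x t \<le> G u_b rho_b \<tau> x t"
    and on_seg: "(xb, tb) \<in> closed_segment (x, t) (0, \<tau>1)"
    and ne: "(xb, tb) \<noteq> (x, t)"
  shows "{\<tau>. \<tau> \<ge> 0 \<and> (\<forall>\<sigma>\<ge>0. G u_b rho_b \<tau> xb tb \<le> G u_b rho_b \<sigma> xb tb)} = {\<tau>1}"
proof -
  interpret boundary_data u_b rho_b
    using u_meas u_bdd u_pos rho_meas rho_locbdd rho_pos by unfold_locales
  obtain s where s: "0 \<le> s" "s \<le> 1"
    and xb: "xb = (1 - s) * x + s * 0" and tb: "tb = (1 - s) * t + s * \<tau>1"
    using on_seg by (auto simp: closed_segment_def)
  have "0 < s"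
    using ne s xb tb by (cases "s = 0") auto
  have "{\<tau>\<in>{0..}. \<forall>\<sigma>\<in>{0..}. G u_b rho_b \<tau> xb tb \<le> G u_b rho_b \<sigma> xb tb} = {\<tau>1}"
  proof (rule argmin_unique_of_convex_combination[where f = "\<lambda>\<tau>. G u_b rho_b \<tau> x t"
        and g = "\<lambda>\<tau>. G u_b rho_b \<tau> 0 \<tau>1"])
    show "\<forall>\<tau>\<in>{0..}. G u_b rho_b \<tau> xb tb
        = (1 - s) * G u_b rho_b \<tau> x t + s * G u_b rho_b \<tau> 0 \<tau>1"
      using G_affine[of _ s x 0 t \<tau>1] by (simp add: xb tb)
  qed (use \<tau>1_nonneg \<tau>1_min G_zero_strict_argmin \<open>0 < s\<close> s in auto)
  then show ?thesis
    by (simp add: atLeast_def)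
qed

end
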